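(* In the setting described in the context, for $m\in\mathcal{M}$ and $s\in\mathcal{S}$ define $V$ by the Bellman equation $$V(m,s)=\min_{g^r\in\{1,\dots,k\},\,g^d\in\{1,\dots,k\}}\Big(\ell(m,s,g^r,g^d)+\beta\sum_{\hat m\in\mathcal{M}}\mathbb{P}(\hat m\mid m,g^r,g^d)\,V(\hat m,f(s))\Big),$$ and let $(\mathfrak{g}^{r,*}(m,s),\mathfrak{g}^{d,*}(m,s))$ be a minimizer of the right-hand side. Then the control law $$u^{i,*}_t=\mathbb{1}(x^i_t=0)\,\mathfrak{g}^{r,*}(m_t,s_t)+\mathbb{1}(x^i_t=1)\,\mathfrak{g}^{d,*}(m_t,s_t),\quad i\in\{1,\dots,n\},\ t\in\mathbb{N},$$ is optimal, i.e. the corresponding strategy $g^*$ satisfies $J(g^* )\le J(g)$ for every admissible strategy $g$.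
   Context: Setting: $n\in\mathbb{N}$ users, demand probability $p\in(0,1)$, $k$ options $\{1,\dots,k\}$. Each option $u$ has participation rate $\alpha(u)\in[0,1]$, delivery rate $q(u,m)\in(0,1]$, reserve price $c_r(u,1-m)\ge0$ and demand price $c_d(u,m)\ge0$, for $m\in\mathcal{M}:=\{0,\frac1n,\dots,1\}$. User $i$ has state $x^i_t\in\{0,1\}$ (1 = has a demand); mean-field $m_t=\frac1n\sum_i\mathbb{1}(x^i_t=1)$. Given option $u^i_t$ and $m_t$: $\mathbb{P}(x^i_{t+1}=1\mid x^i_t=0,u^i_t,m_t)=(1-\alpha(u^i_t))p$, $\mathbb{P}(x^i_{t+1}=0\mid x^i_t=1,u^i_t,m_t)=q(u^i_t,m_t)$ (complementary probabilities otherwise), users' transitions conditionally independent given current joint states and actions. Per-user cost $c(x,u,m)=\mathbb{1}(x=0)c_r(u,1-m)+\mathbb{1}(x=1)c_d(u,m)$. Desired load trajectory: set $\mathcal{S}$, maps $f:\mathcal{S}\to\mathcal{S}$, $h:\mathcal{S}\to[0,1]$, known initial $s_1$, $s_{t+1}=f(s_t)$, $\theta_t=h(s_t)$. $D:\mathcal{M}\times[0,1]\to\mathbb{R}_{\ge0}$ is a distance function, $\beta\in(0,1)$ a discount factor. Admissible strategies $g=(g_1,g_2,\dots)$ have $u^i_t=g_t(x^i_t,m_{1:t})$ with $g_t:\{0,1\}\times\mathcal{M}^t\to\{1,\dots,k\}$, common to all users. The cost is $J(g)=\mathbb{E}^g\big[\sum_{t=1}^\infty\beta^{t-1}\frac1n\big(\sum_{i=1}^n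 c(x^i_t,u^i_t,m_t)+D(m_t,\theta_t)\big)\big]$. Define $\ell(m,s,g^r,g^d):=(1-m)c_r(g^r,1-m)+m\,c_d(g^d,m)+D(m,h(s))$. The transition kernel $\mathbb{P}(\hat m\mid m,g^r,g^d)$ is the probability that $m_{t+1}=\hat m$ given $m_t=m$ when users with state $0$ use option $g^r$ and users with state $1$ use option $g^d$; explicitly it is the distribution of $\frac1n(Y_0+Y_1)$ with $Y_0\sim\mathrm{Binomial}(n(1-m),(1-\alpha(g^r))p)$ and $Y_1\sim\mathrm{Binomial}(nm,1-q(g^d,m))$ independent. *)

theory Defs
  imports "HOL-Probability.Probability"
begin

text \<open>Users are indexed by i < n; a joint state is a function
  nat => bool (True = the user has a demand, i.e. state 1).
  Time is 1-based: strategy component g t is used at time t (t >= 1) and receives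
  the history [m_1, ..., m_t] as a list.\<close>

definition Mset :: "nat \<Rightarrow> real set" where
  "Mset n = (\<lambda>j. real j / real n) ` {..n}"

definition mf :: "nat \<Rightarrow> (nat \<Rightarrow> bool) \<Rightarrow> real" where
  "mf n x = real (card {i. i < n \<and> x i}) / real n"

definition step_pmf ::
  "nat \<Rightarrow> real \<Rightarrow> (nat \<Rightarrow> real) \<Rightarrow> (nat \<Rightarrow> real \<Rightarrow> real)
   \<Rightarrow> (nat \<Rightarrow> bool) \<Rightarrow> (nat \<Rightarrow> nat) \<Rightarrow> real \<Rightarrow> (nat \<Rightarrow> bool) pmf" where
  "step_pmf n p alpha q x u m =
     Pi_pmf {..<n} False
       (\<lambda>i. if x i then bernoulli_pmf (1 - q (u i) m)
            else bernoulli_pmf ((1 - alpha (u i)) * p))"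

text \<open>Distribution of (x_t, [m_1,...,m_t]) at time Suc t under strategy g,
  with initial joint-state distribution x0.\<close>
primrec proc ::
  "nat \<Rightarrow> real \<Rightarrow> (nat \<Rightarrow> real) \<Rightarrow> (nat \<Rightarrow> real \<Rightarrow> real)
   \<Rightarrow> (nat \<Rightarrow> bool \<Rightarrow> real list \<Rightarrow> nat) \<Rightarrow> (nat \<Rightarrow> bool) pmf
   \<Rightarrow> nat \<Rightarrow> ((nat \<Rightarrow> bool) \<times> real list) pmf" where
  "proc n p alpha q g x0 0 = map_pmf (\<lambda>x. (x, [mf n x])) x0"
| "proc n p alpha q g x0 (Suc t) =
     bind_pmf (proc n p alpha q g x0 t)
       (\<lambda>(x, hist). map_pmf (\<lambda>x'. (x', hist @ [mf n x']))
          (step_pmf n p alpha q x (\<lambda>i. g (Suc t) (x i) hist) (mf n x)))"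

definition ucost ::
  "(nat \<Rightarrow> real \<Rightarrow> real) \<Rightarrow> (nat \<Rightarrow> real \<Rightarrow> real) \<Rightarrow> bool \<Rightarrow> nat \<Rightarrow> real \<Rightarrow> real" where
  "ucost cr cd x u m = (if x then cd u m else cr u (1 - m))"

definition Jcost ::
  "nat \<Rightarrow> real \<Rightarrow> (nat \<Rightarrow> real) \<Rightarrow> (nat \<Rightarrow> real \<Rightarrow> real)
   \<Rightarrow> (nat \<Rightarrow> real \<Rightarrow> real) \<Rightarrow> (nat \<Rightarrow> real \<Rightarrow> real) \<Rightarrow> (real \<Rightarrow> real \<Rightarrow> real)
   \<Rightarrow> ('s \<Rightarrow> 's) \<Rightarrow> ('s \<Rightarrow> real) \<Rightarrow> 's \<Rightarrow> real
   \<Rightarrow> (nat \<Rightarrow> bool) pmf \<Rightarrow> (nat \<Rightarrow> bool \<Rightarrow> real list \<Rightarrow> nat) \<Rightarrow> real" where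
  "Jcost n p alpha q cr cd D f h s1 beta x0 g =
     (\<Sum>t. beta ^ t *
        measure_pmf.expectation (proc n p alpha q g x0 t)
          (\<lambda>(x, hist).
             (1 / real n) * (\<Sum>i<n. ucost cr cd (x i) (g (Suc t) (x i) hist) (mf n x))
             + D (mf n x) (h ((f ^^ t) s1))))"

definition ell ::
  "(nat \<Rightarrow> real \<Rightarrow> real) \<Rightarrow> (nat \<Rightarrow> real \<Rightarrow> real) \<Rightarrow> (real \<Rightarrow> real \<Rightarrow> real)
   \<Rightarrow> ('s \<Rightarrow> real) \<Rightarrow> real \<Rightarrow> 's \<Rightarrow> nat \<Rightarrow> nat \<Rightarrow> real" where
  "ell cr cd D h m s gr gd = (1 - m) * cr gr (1 - m) + m * cd gd m + D m (h s)"

definition Pkern ::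
  "nat \<Rightarrow> real \<Rightarrow> (nat \<Rightarrow> real) \<Rightarrow> (nat \<Rightarrow> real \<Rightarrow> real)
   \<Rightarrow> real \<Rightarrow> nat \<Rightarrow> nat \<Rightarrow> real pmf" where
  "Pkern n p alpha q m gr gd =
     map_pmf (\<lambda>(a, b). real (a + b) / real n)
       (pair_pmf (binomial_pmf (n - nat (round (real n * m))) ((1 - alpha gr) * p))
                 (binomial_pmf (nat (round (real n * m))) (1 - q gd m)))"

definition Qval ::
  "nat \<Rightarrow> real \<Rightarrow> (nat \<Rightarrow> real) \<Rightarrow> (nat \<Rightarrow> real \<Rightarrow> real)
   \<Rightarrow> (nat \<Rightarrow> real \<Rightarrow> real) \<Rightarrow> (nat \<Rightarrow> real \<Rightarrow> real) \<Rightarrow> (real \<Rightarrow> real \<Rightarrow> real)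
   \<Rightarrow> ('s \<Rightarrow> 's) \<Rightarrow> ('s \<Rightarrow> real) \<Rightarrow> real \<Rightarrow> (real \<Rightarrow> 's \<Rightarrow> real)
   \<Rightarrow> real \<Rightarrow> 's \<Rightarrow> nat \<Rightarrow> nat \<Rightarrow> real" where
  "Qval n p alpha q cr cd D f h beta V m s gr gd =
     ell cr cd D h m s gr gd
     + beta * (\<Sum>m'\<in>Mset n. pmf (Pkern n p alpha q m gr gd) m' * V m' (f s))"

end

theory Submission
  imports Defs
begin

text \<open>Write W_t for the expected value E V(m_t, s_t) and C_t for the expected stage cost at time t
  under an admissible strategy. Given the history up to time t, the mean field m_(t+1) has law
  P(. | m_t, g^r, g^d), where g^r and g^d are the options the strategy assigns to idle and to
  demanding users. So C_t + beta W_(t+1) is the expectation of the right-hand side of the Bellman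
  equation at these options, whence W_t <= C_t + beta W_(t+1), with equality for the greedy
  strategy g*. As V and the stage costs are bounded, telescoping gives W_1 <= J(g) and W_1 = J(g*),
  and W_1 does not depend on the strategy.\<close>

section \<open>Discounted telescoping\<close>

lemma discounted_partial_sums_tendsto:
  fixes C W :: "nat \<Rightarrow> real"
  assumes beta: "\<bar>beta\<bar> < 1" and C: "\<And>t. \<bar>C t\<bar> \<le> BC" and W: "\<And>t. \<bar>W t\<bar> \<le> BW"
  shows "(\<lambda>N. (\<Sum>t<N. beta ^ t * C t) + beta ^ N * W N) \<longlonglongrightarrow> (\<Sum>t. beta ^ t * C t)"
proof -
  have "summable (\<lambda>t. beta ^ t * C t)"
  proof (rule summable_comparison_test')
    show "summable (\<lambda>t. \<bar>beta\<bar> ^ t * BC)"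
      using beta by (intro summable_mult2 summable_geometric) auto
    show "norm (beta ^ t * C t) \<le> \<bar>beta\<bar> ^ t * BC" for t
      using C[of t] by (simp add: abs_mult power_abs mult_left_mono)
  qed
  moreover have "(\<lambda>N. beta ^ N * W N) \<longlonglongrightarrow> 0"
  proof (rule Lim_null_comparison)
    show "\<forall>\<^sub>F N in sequentially. norm (beta ^ N * W N) \<le> \<bar>beta\<bar> ^ N * BW"
      using W by (simp add: abs_mult power_abs mult_left_mono)
    show "(\<lambda>N. \<bar>beta\<bar> ^ N * BW) \<longlonglongrightarrow> 0"
      using beta by (intro tendsto_mult_left_zero LIMSEQ_power_zero) auto
  qed
  ultimately show ?thesis
    using tendsto_add[OF summable_LIMSEQ] by fastforce
qed

lemma le_discounted_suminf:
  fixes C W :: "nat \<Rightarrow> real"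
  assumes beta: "0 \<le> beta" "beta < 1" and C: "\<And>t. \<bar>C t\<bar> \<le> BC" and W: "\<And>t. \<bar>W t\<bar> \<le> BW"
    and step: "\<And>t. W t \<le> C t + beta * W (Suc t)"
  shows "W 0 \<le> (\<Sum>t. beta ^ t * C t)"
proof (rule LIMSEQ_le_const[OF discounted_partial_sums_tendsto[OF _ C W]])
  have "W 0 \<le> (\<Sum>t<N. beta ^ t * C t) + beta ^ N * W N" for N
  proof (induction N)
    case (Suc N)
    have "beta ^ N * W N \<le> beta ^ N * C N + beta ^ Suc N * W (Suc N)"
      using mult_left_mono[OF step[of N], of "beta ^ N"] beta by (simp add: algebra_simps)
    with Suc.IH show ?case by simp
  qed simp
  then show "\<exists>N0. \<forall>N\<ge>N0. W 0 \<le> (\<Sum>t<N. beta ^ t * C t) + beta ^ N * W N" by blast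
qed (use beta in auto)

lemma eq_discounted_suminf:
  fixes C W :: "nat \<Rightarrow> real"
  assumes beta: "\<bar>beta\<bar> < 1" and C: "\<And>t. \<bar>C t\<bar> \<le> BC" and W: "\<And>t. \<bar>W t\<bar> \<le> BW"
    and step: "\<And>t. W t = C t + beta * W (Suc t)"
  shows "W 0 = (\<Sum>t. beta ^ t * C t)"
proof -
  have partial: "W 0 = (\<Sum>t<N. beta ^ t * C t) + beta ^ N * W N" for N
  proof (induction N)
    case (Suc N)
    then show ?case
      using step[of N] by (simp add: algebra_simps)
  qed simp
  have "(\<lambda>N. W 0) \<longlonglongrightarrow> (\<Sum>t. beta ^ t * C t)"
    using discounted_partial_sums_tendsto[of beta C BC W BW, OF beta C W] unfolding partial[symmetric] .
  then show ?thesis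
    using LIMSEQ_unique tendsto_const by blast
qed

section \<open>Expectations under probability mass functions\<close>

lemma integrable_measure_pmf_bounded:
  fixes f :: "'a \<Rightarrow> real"
  assumes "\<And>z. z \<in> set_pmf M \<Longrightarrow> \<bar>f z\<bar> \<le> B"
  shows "integrable (measure_pmf M) f"
  using assms by (intro measure_pmf.integrable_const_bound[where B = B]) (auto simp: AE_measure_pmf_iff)

lemma abs_expectation_le:
  fixes f :: "'a \<Rightarrow> real"
  assumes "\<And>z. z \<in> set_pmf M \<Longrightarrow> \<bar>f z\<bar> \<le> B"
  shows "\<bar>measure_pmf.expectation M f\<bar> \<le> B"
proof -
  have f: "integrable (measure_pmf M) f"
    using assms by (rule integrable_measure_pmf_bounded)
  have "measure_pmf.expectation M f \<le> B"
    using assms by (intro measure_pmf.integral_le_const[OF f]) (auto simp: AE_measure_pmf_iff abs_le_iff)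
  moreover have "- B \<le> measure_pmf.expectation M f"
    using assms by (intro measure_pmf.integral_ge_const[OF f]) (force simp: AE_measure_pmf_iff abs_le_iff)
  ultimately show ?thesis by simp
qed

lemma expectation_bind_pmf:
  fixes f :: "'b \<Rightarrow> real"
  assumes "\<And>y. \<bar>f y\<bar> \<le> B"
  shows "measure_pmf.expectation (bind_pmf M N) f
         = measure_pmf.expectation M (\<lambda>x. measure_pmf.expectation (N x) f)"
  unfolding measure_pmf_bind
  by (rule integral_bind[where K = "count_space UNIV" and B = B and B' = 1])
     (use assms in \<open>auto simp: measure_pmf.finite_measure_axioms measure_pmf.emeasure_space_1 measure_subprob\<close>)

lemma card_Pi_pmf_bernoulli_two_groups:
  fixes P :: "'a \<Rightarrow> bool"
  assumes I: "finite I" and a: "a \<in> {0..1}" and b: "b \<in> {0..1}"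
  shows "map_pmf (\<lambda>y. card {i\<in>I. y i})
           (Pi_pmf I dflt (\<lambda>i. if P i then bernoulli_pmf b else bernoulli_pmf a))
         = map_pmf (\<lambda>(u, v). u + v)
             (pair_pmf (binomial_pmf (card {i\<in>I. \<not> P i}) a) (binomial_pmf (card {i\<in>I. P i}) b))"
proof -
  define A B where "A = {i\<in>I. \<not> P i}" and "B = {i\<in>I. P i}"
  have fin: "finite A" "finite B" and disj: "A \<inter> B = {}" and I_eq: "I = A \<union> B"
    using I by (auto simp: A_def B_def)
  let ?glue = "\<lambda>(y, z) i. if i \<in> A then y i else z i"
  have card_glue: "card {i\<in>I. ?glue w i} = (\<lambda>(y, z). card {i\<in>A. y i} + card {i\<in>B. z i}) w"
    for w :: "('a \<Rightarrow> bool) \<times> ('a \<Rightarrow> bool)"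
  proof (cases w)
    case (Pair y z)
    have "{i\<in>I. ?glue w i} = {i\<in>A. y i} \<union> {i\<in>B. z i}"
      using disj by (auto simp: I_eq Pair)
    then show ?thesis
      using fin disj by (simp add: Pair card_Un_disjoint disjoint_iff)
  qed
  have "Pi_pmf I dflt (\<lambda>i. if P i then bernoulli_pmf b else bernoulli_pmf a)
        = map_pmf ?glue (pair_pmf (Pi_pmf A dflt (\<lambda>_. bernoulli_pmf a)) (Pi_pmf B dflt (\<lambda>_. bernoulli_pmf b)))"
    unfolding I_eq Pi_pmf_union[OF fin disj]
    by (intro arg_cong2[where f = "\<lambda>X Y. map_pmf ?glue (pair_pmf X Y)"] Pi_pmf_cong)
       (auto simp: A_def B_def)
  then have "map_pmf (\<lambda>y. card {i\<in>I. y i}) (Pi_pmf I dflt (\<lambda>i. if P i then bernoulli_pmf b else bernoulli_pmf a))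
        = map_pmf (\<lambda>(y, z). card {i\<in>A. y i} + card {i\<in>B. z i})
            (pair_pmf (Pi_pmf A dflt (\<lambda>_. bernoulli_pmf a)) (Pi_pmf B dflt (\<lambda>_. bernoulli_pmf b)))"
    by (simp only: map_pmf_comp card_glue)
  also have "\<dots> = map_pmf (\<lambda>(u, v). u + v) (map_pmf (\<lambda>(y, z). (card {i\<in>A. y i}, card {i\<in>B. z i}))
            (pair_pmf (Pi_pmf A dflt (\<lambda>_. bernoulli_pmf a)) (Pi_pmf B dflt (\<lambda>_. bernoulli_pmf b))))"
    by (simp add: map_pmf_comp case_prod_unfold)
  also have "\<dots> = map_pmf (\<lambda>(u, v). u + v) (pair_pmf (binomial_pmf (card A) a) (binomial_pmf (card B) b))"
    unfolding map_pair
    using binomial_pmf_altdef'[OF fin(1) refl a, of dflt] binomial_pmf_altdef'[OF fin(2) refl b, of dflt]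
    by simp
  finally show ?thesis
    by (simp add: A_def B_def)
qed

section \<open>The mean-field transition kernel\<close>

lemma finite_Mset: "finite (Mset n)"
  unfolding Mset_def by simp

lemma Mset_bounds: "m \<in> Mset n \<Longrightarrow> 0 \<le> m \<and> m \<le> 1"
  unfolding Mset_def by (auto simp: divide_le_eq_1)

lemma card_users_le: "card {i. i < n \<and> x i} \<le> n"
  using card_mono[of "{..<n}" "{i. i < n \<and> x i}"] by auto

lemma mf_in_Mset: "n > 0 \<Longrightarrow> mf n x \<in> Mset n"
  unfolding mf_def Mset_def using card_users_le[of n x] by auto

lemma Mset_eq_mf:
  assumes "m \<in> Mset n"
  obtains x where "m = mf n x"
proof -
  obtain j where j: "j \<le> n" "m = real j / real n"
    using assms unfolding Mset_def by auto
  then have "{i. i < n \<and> i < j} = {..<j}" by auto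
  with j have "m = mf n (\<lambda>i. i < j)"
    unfolding mf_def by simp
  then show thesis ..
qed

lemma average_ucost:
  assumes "n > 0"
  shows "(1 / real n) * (\<Sum>i<n. ucost cr cd (x i) (a (x i)) (mf n x))
         = (1 - mf n x) * cr (a False) (1 - mf n x) + mf n x * cd (a True) (mf n x)"
proof -
  define c where "c = card {i. i < n \<and> x i}"
  have idle: "card {i. i < n \<and> \<not> x i} = n - c"
  proof -
    have "{i. i < n \<and> \<not> x i} = {..<n} - {i. i < n \<and> x i}" by auto
    then show ?thesis by (simp add: c_def card_Diff_subset subset_eq)
  qed
  have "(\<Sum>i<n. ucost cr cd (x i) (a (x i)) (mf n x))
        = real (card ({..<n} \<inter> {i. x i})) * cd (a True) (mf n x)
          + real (card ({..<n} \<inter> - {i. x i})) * cr (a False) (1 - mf n x)"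
    by (simp add: ucost_def sum.If_cases)
  also have "{..<n} \<inter> {i. x i} = {i. i < n \<and> x i}" by auto
  also have "{..<n} \<inter> - {i. x i} = {i. i < n \<and> \<not> x i}" by auto
  finally have sum_eq: "(\<Sum>i<n. ucost cr cd (x i) (a (x i)) (mf n x))
        = real c * cd (a True) (mf n x) + real (n - c) * cr (a False) (1 - mf n x)"
    by (simp add: c_def idle)
  have busy_eq: "real c = mf n x * real n"
    using assms by (simp add: mf_def c_def)
  have idle_eq: "real (n - c) = (1 - mf n x) * real n"
    using card_users_le[of n x] busy_eq by (simp add: c_def of_nat_diff algebra_simps)
  show ?thesis
    using assms by (simp add: sum_eq busy_eq idle_eq field_simps)
qed

lemma map_mf_step_pmf:
  assumes n: "n > 0" and u: "\<And>i. i < n \<Longrightarrow> u i = (if x i then gd else gr)"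
    and idle: "(1 - alpha gr) * p \<in> {0..1}" and busy: "1 - q gd (mf n x) \<in> {0..1}"
  shows "map_pmf (mf n) (step_pmf n p alpha q x u (mf n x)) = Pkern n p alpha q (mf n x) gr gd"
proof -
  have step: "step_pmf n p alpha q x u (mf n x)
      = Pi_pmf {..<n} False (\<lambda>i. if x i then bernoulli_pmf (1 - q gd (mf n x))
                                else bernoulli_pmf ((1 - alpha gr) * p))"
    unfolding step_pmf_def by (rule Pi_pmf_cong) (auto simp: u)
  have busy_card: "nat (round (real n * mf n x)) = card {i\<in>{..<n}. x i}"
    using n by (simp add: mf_def)
  have idle_card: "card {i\<in>{..<n}. \<not> x i} = n - card {i\<in>{..<n}. x i}"
  proof -
    have "{i\<in>{..<n}. \<not> x i} = {..<n} - {i\<in>{..<n}. x i}" by auto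
    then show ?thesis by (simp add: card_Diff_subset subset_eq)
  qed
  have "map_pmf (mf n) (step_pmf n p alpha q x u (mf n x))
      = map_pmf (\<lambda>c. real c / real n) (map_pmf (\<lambda>y. card {i\<in>{..<n}. y i})
          (Pi_pmf {..<n} False (\<lambda>i. if x i then bernoulli_pmf (1 - q gd (mf n x))
                                    else bernoulli_pmf ((1 - alpha gr) * p))))"
    unfolding step map_pmf_comp by (intro pmf.map_cong refl) (simp add: mf_def)
  also have "\<dots> = map_pmf (\<lambda>c. real c / real n) (map_pmf (\<lambda>(a, b). a + b)
          (pair_pmf (binomial_pmf (card {i\<in>{..<n}. \<not> x i}) ((1 - alpha gr) * p))
                    (binomial_pmf (card {i\<in>{..<n}. x i}) (1 - q gd (mf n x)))))"
    by (simp only: card_Pi_pmf_bernoulli_two_groups[OF finite_lessThan idle busy])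
  also have "\<dots> = Pkern n p alpha q (mf n x) gr gd"
    unfolding Pkern_def busy_card idle_card map_pmf_comp by (simp add: case_prod_unfold)
  finally show ?thesis .
qed

section \<open>Verification of the greedy strategy\<close>

type_synonym strategy = "nat \<Rightarrow> bool \<Rightarrow> real list \<Rightarrow> nat"
type_synonym run_state = "(nat \<Rightarrow> bool) \<times> real list"

locale mean_field_bellman =
  fixes n k :: nat and p beta :: real
    and alpha :: "nat \<Rightarrow> real" and q cr cd :: "nat \<Rightarrow> real \<Rightarrow> real"
    and D :: "real \<Rightarrow> real \<Rightarrow> real"
    and f :: "'s \<Rightarrow> 's" and h :: "'s \<Rightarrow> real" and s1 :: 's
    and V :: "real \<Rightarrow> 's \<Rightarrow> real" and grs gds :: "real \<Rightarrow> 's \<Rightarrow> nat"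
    and x0 :: "(nat \<Rightarrow> bool) pmf" and BV :: real
  assumes n_pos: "n > 0"
    and p: "0 \<le> p" "p \<le> 1"
    and beta: "0 \<le> beta" "beta < 1"
    and alpha: "\<And>u. u \<in> {1..k} \<Longrightarrow> 0 \<le> alpha u \<and> alpha u \<le> 1"
    and q: "\<And>u m. u \<in> {1..k} \<Longrightarrow> m \<in> Mset n \<Longrightarrow> 0 \<le> q u m \<and> q u m \<le> 1"
    and cr: "\<And>u m. u \<in> {1..k} \<Longrightarrow> m \<in> Mset n \<Longrightarrow> cr u (1 - m) \<ge> 0"
    and cd: "\<And>u m. u \<in> {1..k} \<Longrightarrow> m \<in> Mset n \<Longrightarrow> cd u m \<ge> 0"
    and D: "\<And>m s. m \<in> Mset n \<Longrightarrow> D m (h s) \<ge> 0"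
    and V_bound: "\<And>m s. m \<in> Mset n \<Longrightarrow> \<bar>V m s\<bar> \<le> BV"
    and greedy_option_range: "\<And>m s. m \<in> Mset n \<Longrightarrow> grs m s \<in> {1..k} \<and> gds m s \<in> {1..k}"
    and V_eq_Qval_greedy: "\<And>m s. m \<in> Mset n \<Longrightarrow>
       V m s = Qval n p alpha q cr cd D f h beta V m s (grs m s) (gds m s)"
    and V_le_Qval: "\<And>m s gr gd. m \<in> Mset n \<Longrightarrow> gr \<in> {1..k} \<Longrightarrow> gd \<in> {1..k} \<Longrightarrow>
       V m s \<le> Qval n p alpha q cr cd D f h beta V m s gr gd"
begin

abbreviation "Q \<equiv> Qval n p alpha q cr cd D f h beta V"

abbreviation traj :: "nat \<Rightarrow> 's" where
  "traj t \<equiv> (f ^^ t) s1"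

abbreviation run :: "strategy \<Rightarrow> nat \<Rightarrow> run_state pmf" where
  "run G \<equiv> proc n p alpha q G x0"

lemma map_mf_step_pmf_eq_Pkern:
  assumes gr: "gr \<in> {1..k}" and gd: "gd \<in> {1..k}" and u: "\<And>i. i < n \<Longrightarrow> u i = (if x i then gd else gr)"
  shows "map_pmf (mf n) (step_pmf n p alpha q x u (mf n x)) = Pkern n p alpha q (mf n x) gr gd"
proof (rule map_mf_step_pmf[OF n_pos u])
  show "(1 - alpha gr) * p \<in> {0..1}"
    using alpha[OF gr] p by (auto intro: mult_le_one)
  show "1 - q gd (mf n x) \<in> {0..1}"
    using q[OF gd mf_in_Mset[OF n_pos]] by auto
qed

lemma set_Pkern_subset_Mset:
  assumes "gr \<in> {1..k}" "gd \<in> {1..k}" "m \<in> Mset n"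
  shows "set_pmf (Pkern n p alpha q m gr gd) \<subseteq> Mset n"
proof -
  obtain x where x: "m = mf n x"
    using Mset_eq_mf[OF assms(3)] .
  have "Pkern n p alpha q m gr gd = map_pmf (mf n) (step_pmf n p alpha q x (\<lambda>i. if x i then gd else gr) m)"
    unfolding x by (rule map_mf_step_pmf_eq_Pkern[OF assms(1,2), symmetric]) simp
  then show ?thesis
    using mf_in_Mset[OF n_pos] by auto
qed

lemma Qval_eq_expectation:
  assumes "gr \<in> {1..k}" "gd \<in> {1..k}" "m \<in> Mset n"
  shows "Q m s gr gd = ell cr cd D h m s gr gd
           + beta * measure_pmf.expectation (Pkern n p alpha q m gr gd) (\<lambda>m'. V m' (f s))"
  unfolding Qval_def using set_Pkern_subset_Mset[OF assms]
  by (subst integral_measure_pmf_real[OF finite_Mset]) (auto simp: mult.commute)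

lemma abs_expectation_V_le:
  assumes "gr \<in> {1..k}" "gd \<in> {1..k}" "m \<in> Mset n"
  shows "\<bar>measure_pmf.expectation (Pkern n p alpha q m gr gd) (\<lambda>m'. V m' s)\<bar> \<le> BV"
  using set_Pkern_subset_Mset[OF assms] V_bound by (intro abs_expectation_le) auto

text \<open>Only D >= 0 is assumed; the upper bound comes from the Bellman equation at the greedy options,
  where all other terms are nonnegative or bounded by BV.\<close>
lemma D_le:
  assumes m: "m \<in> Mset n"
  shows "D m (h s) \<le> (1 + beta) * BV"
proof -
  let ?E = "measure_pmf.expectation (Pkern n p alpha q m (grs m s) (gds m s)) (\<lambda>m'. V m' (f s))"
  have opt: "grs m s \<in> {1..k}" "gds m s \<in> {1..k}"
    using greedy_option_range[OF m] by auto
  have "V m s = (1 - m) * cr (grs m s) (1 - m) + m * cd (gds m s) m + D m (h s) + beta * ?E"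
    using V_eq_Qval_greedy[OF m] Qval_eq_expectation[OF opt m] by (simp add: ell_def)
  moreover have "0 \<le> (1 - m) * cr (grs m s) (1 - m)" "0 \<le> m * cd (gds m s) m"
    using Mset_bounds[OF m] cr[OF opt(1) m] cd[OF opt(2) m] by simp_all
  moreover have "- BV \<le> ?E"
    using abs_expectation_V_le[OF opt m, of "f s"] by (simp add: abs_le_iff)
  then have "- (beta * BV) \<le> beta * ?E"
    using mult_left_mono[OF _ beta(1)] by fastforce
  moreover have "V m s \<le> BV"
    using V_bound[OF m, of s] by (simp add: abs_le_iff)
  ultimately show ?thesis
    by (simp add: algebra_simps)
qed

definition cost_max :: real where
  "cost_max = Max ((\<lambda>(u, m). max (cr u (1 - m)) (cd u m)) ` ({1..k} \<times> Mset n))"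

lemma le_cost_max:
  assumes "u \<in> {1..k}" "m \<in> Mset n"
  shows "cr u (1 - m) \<le> cost_max" "cd u m \<le> cost_max"
proof -
  have "max (cr u (1 - m)) (cd u m) \<le> cost_max"
    unfolding cost_max_def using assms by (intro Max_ge) (force simp: finite_Mset)+
  then show "cr u (1 - m) \<le> cost_max" "cd u m \<le> cost_max"
    by simp_all
qed

lemma ell_bounds:
  assumes gr: "gr \<in> {1..k}" and gd: "gd \<in> {1..k}" and m: "m \<in> Mset n"
  shows "0 \<le> ell cr cd D h m s gr gd \<and> ell cr cd D h m s gr gd \<le> cost_max + (1 + beta) * BV"
proof -
  have m01: "0 \<le> m" "m \<le> 1"
    using Mset_bounds[OF m] by auto
  have "(1 - m) * cr gr (1 - m) \<le> (1 - m) * cost_max" "m * cd gd m \<le> m * cost_max"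
    using m01 le_cost_max[OF gr m] le_cost_max[OF gd m] by (simp_all add: mult_left_mono)
  moreover have "0 \<le> (1 - m) * cr gr (1 - m)" "0 \<le> m * cd gd m"
    using m01 cr[OF gr m] cd[OF gd m] by simp_all
  ultimately show ?thesis
    using D[OF m, of s] D_le[OF m, of s] by (simp add: ell_def algebra_simps)
qed

lemma last_history: "(x, hist) \<in> set_pmf (run G t) \<Longrightarrow> last hist = mf n x"
  by (induction t arbitrary: x hist) auto

text \<open>Options need only be valid on reachable histories: the greedy strategy reads the mean field
  off the last entry of the history, which lies in Mset n only there.\<close>
definition admissible :: "strategy \<Rightarrow> bool" where
  "admissible G \<longleftrightarrow>
     (\<forall>t x hist b. (x, hist) \<in> set_pmf (run G t) \<longrightarrow> G (Suc t) b hist \<in> {1..k})"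

lemma admissibleD:
  "admissible G \<Longrightarrow> (x, hist) \<in> set_pmf (run G t) \<Longrightarrow> G (Suc t) b hist \<in> {1..k}"
  unfolding admissible_def by blast

definition greedy :: strategy where
  "greedy = (\<lambda>t b hist. if b then gds (last hist) (traj (t - 1)) else grs (last hist) (traj (t - 1)))"

lemma greedy_Suc:
  "(x, hist) \<in> set_pmf (run G t) \<Longrightarrow>
     greedy (Suc t) b hist = (if b then gds (mf n x) (traj t) else grs (mf n x) (traj t))"
  by (simp add: greedy_def last_history)

lemma admissible_greedy: "admissible greedy"
  unfolding admissible_def using greedy_option_range[OF mf_in_Mset[OF n_pos]] by (simp add: greedy_Suc)

definition stage_cost :: "strategy \<Rightarrow> nat \<Rightarrow> run_state \<Rightarrow> real" where
  "stage_cost G t = (\<lambda>(x, hist).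
     (1 / real n) * (\<Sum>i<n. ucost cr cd (x i) (G (Suc t) (x i) hist) (mf n x)) + D (mf n x) (h (traj t)))"

definition next_value :: "strategy \<Rightarrow> nat \<Rightarrow> run_state \<Rightarrow> real" where
  "next_value G t = (\<lambda>(x, hist). measure_pmf.expectation
     (Pkern n p alpha q (mf n x) (G (Suc t) False hist) (G (Suc t) True hist)) (\<lambda>m'. V m' (traj (Suc t))))"

definition expected_cost :: "strategy \<Rightarrow> nat \<Rightarrow> real" where
  "expected_cost G t = measure_pmf.expectation (run G t) (stage_cost G t)"

definition expected_value :: "strategy \<Rightarrow> nat \<Rightarrow> real" where
  "expected_value G t = measure_pmf.expectation (run G t) (\<lambda>(x, hist). V (mf n x) (traj t))"

lemma Jcost_eq_suminf_expected_cost: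
  "Jcost n p alpha q cr cd D f h s1 beta x0 G = (\<Sum>t. beta ^ t * expected_cost G t)"
  unfolding Jcost_def expected_cost_def stage_cost_def ..

lemma stage_cost_eq_ell:
  "stage_cost G t (x, hist) = ell cr cd D h (mf n x) (traj t) (G (Suc t) False hist) (G (Suc t) True hist)"
  using average_ucost[OF n_pos, of cr cd x "\<lambda>b. G (Suc t) b hist"] by (simp add: stage_cost_def ell_def)

lemma stage_cost_bounds:
  assumes "admissible G" "z \<in> set_pmf (run G t)"
  shows "\<bar>stage_cost G t z\<bar> \<le> cost_max + (1 + beta) * BV"
  using assms ell_bounds[OF admissibleD admissibleD mf_in_Mset[OF n_pos]]
  by (cases z) (fastforce simp: stage_cost_eq_ell)

lemma abs_next_value_le:
  assumes "admissible G" "z \<in> set_pmf (run G t)"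
  shows "\<bar>next_value G t z\<bar> \<le> BV"
  using assms abs_expectation_V_le[OF admissibleD admissibleD mf_in_Mset[OF n_pos]]
  by (cases z) (fastforce simp: next_value_def)

lemma integrable_stage_cost: "admissible G \<Longrightarrow> integrable (measure_pmf (run G t)) (stage_cost G t)"
  by (rule integrable_measure_pmf_bounded) (rule stage_cost_bounds)

lemma integrable_next_value: "admissible G \<Longrightarrow> integrable (measure_pmf (run G t)) (next_value G t)"
  by (rule integrable_measure_pmf_bounded) (rule abs_next_value_le)

lemma stage_cost_plus_next_value:
  assumes "admissible G" "(x, hist) \<in> set_pmf (run G t)"
  shows "stage_cost G t (x, hist) + beta * next_value G t (x, hist)
         = Q (mf n x) (traj t) (G (Suc t) False hist) (G (Suc t) True hist)"
  using Qval_eq_expectation[OF admissibleD[OF assms] admissibleD[OF assms] mf_in_Mset[OF n_pos]]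
  by (simp add: stage_cost_eq_ell next_value_def)

lemma expected_value_Suc:
  assumes G: "admissible G"
  shows "expected_value G (Suc t) = measure_pmf.expectation (run G t) (next_value G t)"
proof -
  let ?step = "\<lambda>x hist. step_pmf n p alpha q x (\<lambda>i. G (Suc t) (x i) hist) (mf n x)"
  have "expected_value G (Suc t) = measure_pmf.expectation (run G t)
      (\<lambda>(x, hist). measure_pmf.expectation (?step x hist) (\<lambda>x'. V (mf n x') (traj (Suc t))))"
    unfolding expected_value_def proc.simps
    by (subst expectation_bind_pmf[where B = BV]) (auto simp: V_bound mf_in_Mset[OF n_pos] case_prod_unfold)
  also have "\<dots> = measure_pmf.expectation (run G t) (next_value G t)"
  proof (rule integral_cong_AE)
    show "AE z in measure_pmf (run G t).
            (\<lambda>(x, hist). measure_pmf.expectation (?step x hist) (\<lambda>x'. V (mf n x') (traj (Suc t)))) z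
            = next_value G t z"
      unfolding AE_measure_pmf_iff
    proof (intro ballI, clarify)
      fix x hist
      assume z: "(x, hist) \<in> set_pmf (run G t)"
      have "Pkern n p alpha q (mf n x) (G (Suc t) False hist) (G (Suc t) True hist) = map_pmf (mf n) (?step x hist)"
        by (rule map_mf_step_pmf_eq_Pkern[OF admissibleD[OF G z] admissibleD[OF G z], symmetric]) simp
      then show "measure_pmf.expectation (?step x hist) (\<lambda>x'. V (mf n x') (traj (Suc t))) = next_value G t (x, hist)"
        by (simp add: next_value_def)
    qed
  qed simp_all
  finally show ?thesis .
qed

lemma expected_cost_plus_expected_value_Suc:
  assumes G: "admissible G"
  shows "expected_cost G t + beta * expected_value G (Suc t)
         = measure_pmf.expectation (run G t) (\<lambda>z. stage_cost G t z + beta * next_value G t z)"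
  using integrable_stage_cost[OF G] integrable_next_value[OF G]
  by (simp add: expected_cost_def expected_value_Suc[OF G])

lemma expected_value_le:
  assumes G: "admissible G"
  shows "expected_value G t \<le> expected_cost G t + beta * expected_value G (Suc t)"
  unfolding expected_cost_plus_expected_value_Suc[OF G] unfolding expected_value_def
proof (rule integral_mono_AE)
  show "integrable (measure_pmf (run G t)) (\<lambda>(x, hist). V (mf n x) (traj t))"
    by (rule integrable_measure_pmf_bounded[where B = BV]) (auto simp: V_bound mf_in_Mset[OF n_pos])
  show "integrable (measure_pmf (run G t)) (\<lambda>z. stage_cost G t z + beta * next_value G t z)"
    by (intro Bochner_Integration.integrable_add integrable_mult_right
          integrable_stage_cost integrable_next_value G)
  show "AE z in measure_pmf (run G t).
          (\<lambda>(x, hist). V (mf n x) (traj t)) z \<le> stage_cost G t z + beta * next_value G t z"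
    unfolding AE_measure_pmf_iff
    by (auto simp: stage_cost_plus_next_value[OF G] intro!: V_le_Qval mf_in_Mset[OF n_pos] admissibleD[OF G])
qed

lemma expected_value_greedy:
  "expected_value greedy t = expected_cost greedy t + beta * expected_value greedy (Suc t)"
  unfolding expected_cost_plus_expected_value_Suc[OF admissible_greedy] unfolding expected_value_def
  by (intro integral_cong_AE)
     (auto simp: AE_measure_pmf_iff stage_cost_plus_next_value[OF admissible_greedy] greedy_Suc
                 V_eq_Qval_greedy mf_in_Mset[OF n_pos])

lemma abs_expected_cost_le: "admissible G \<Longrightarrow> \<bar>expected_cost G t\<bar> \<le> cost_max + (1 + beta) * BV"
  unfolding expected_cost_def by (intro abs_expectation_le stage_cost_bounds)

lemma abs_expected_value_le: "\<bar>expected_value G t\<bar> \<le> BV"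
  unfolding expected_value_def by (intro abs_expectation_le) (auto simp: V_bound mf_in_Mset[OF n_pos])

theorem Jcost_greedy_le:
  assumes G: "admissible G"
  shows "Jcost n p alpha q cr cd D f h s1 beta x0 greedy \<le> Jcost n p alpha q cr cd D f h s1 beta x0 G"
proof -
  have "Jcost n p alpha q cr cd D f h s1 beta x0 greedy = expected_value greedy 0"
    unfolding Jcost_eq_suminf_expected_cost using beta
    by (intro eq_discounted_suminf[where BC = "cost_max + (1 + beta) * BV" and BW = BV, symmetric]
          abs_expected_cost_le[OF admissible_greedy] abs_expected_value_le expected_value_greedy) auto
  also have "\<dots> = expected_value G 0"
    by (simp add: expected_value_def)
  also have "\<dots> \<le> Jcost n p alpha q cr cd D f h s1 beta x0 G"
    unfolding Jcost_eq_suminf_expected_cost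
    by (intro le_discounted_suminf[where BC = "cost_max + (1 + beta) * BV" and BW = BV]
          beta abs_expected_cost_le[OF G] abs_expected_value_le expected_value_le[OF G])
  finally show ?thesis .
qed

end

theorem theorem3:
  fixes n k :: nat and p beta :: real
    and alpha :: "nat \<Rightarrow> real" and q cr cd :: "nat \<Rightarrow> real \<Rightarrow> real"
    and D :: "real \<Rightarrow> real \<Rightarrow> real"
    and f :: "'s \<Rightarrow> 's" and h :: "'s \<Rightarrow> real" and s1 :: 's
    and V :: "real \<Rightarrow> 's \<Rightarrow> real" and grs gds :: "real \<Rightarrow> 's \<Rightarrow> nat"
    and x0 :: "(nat \<Rightarrow> bool) pmf"
    and g :: "nat \<Rightarrow> bool \<Rightarrow> real list \<Rightarrow> nat"
  assumes n_pos: "n > 0" and k_pos: "k > 0"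
    and p: "0 < p" "p < 1"
    and beta: "0 < beta" "beta < 1"
    and alpha: "\<And>u. u \<in> {1..k} \<Longrightarrow> 0 \<le> alpha u \<and> alpha u \<le> 1"
    and q: "\<And>u m. u \<in> {1..k} \<Longrightarrow> m \<in> Mset n \<Longrightarrow> 0 < q u m \<and> q u m \<le> 1"
    and cr: "\<And>u m. u \<in> {1..k} \<Longrightarrow> m \<in> Mset n \<Longrightarrow> cr u (1 - m) \<ge> 0"
    and cd: "\<And>u m. u \<in> {1..k} \<Longrightarrow> m \<in> Mset n \<Longrightarrow> cd u m \<ge> 0"
    and h: "\<And>s. 0 \<le> h s \<and> h s \<le> 1"
    and D: "\<And>m th. m \<in> Mset n \<Longrightarrow> 0 \<le> th \<Longrightarrow> th \<le> 1 \<Longrightarrow> D m th \<ge> 0"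
    and V_bounded: "\<exists>B. \<forall>m\<in>Mset n. \<forall>s. \<bar>V m s\<bar> \<le> B"
    and bellman: "\<And>m s. m \<in> Mset n \<Longrightarrow>
       V m s = Min {Qval n p alpha q cr cd D f h beta V m s gr gd | gr gd. gr \<in> {1..k} \<and> gd \<in> {1..k}}"
    and minimizer: "\<And>m s. m \<in> Mset n \<Longrightarrow>
       grs m s \<in> {1..k} \<and> gds m s \<in> {1..k} \<and>
       (\<forall>gr\<in>{1..k}. \<forall>gd\<in>{1..k}.
          Qval n p alpha q cr cd D f h beta V m s (grs m s) (gds m s)
          \<le> Qval n p alpha q cr cd D f h beta V m s gr gd)"
    and g_adm: "\<And>t x hist. g t x hist \<in> {1..k}"
  shows "Jcost n p alpha q cr cd D f h s1 beta x0
           (\<lambda>t x hist. if x then gds (last hist) ((f ^^ (t - 1)) s1)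
                       else grs (last hist) ((f ^^ (t - 1)) s1))
         \<le> Jcost n p alpha q cr cd D f h s1 beta x0 g"
proof -
  obtain B where B: "\<forall>m\<in>Mset n. \<forall>s. \<bar>V m s\<bar> \<le> B"
    using V_bounded by blast
  have greedy_attains_Min: "V m s = Qval n p alpha q cr cd D f h beta V m s (grs m s) (gds m s)"
    if m: "m \<in> Mset n" for m s
    unfolding bellman[OF m] using minimizer[OF m, of s] by (intro Min_eqI finite_image_set2) auto
  interpret mean_field_bellman n k p beta alpha q cr cd D f h s1 V grs gds x0 B
  proof
    show "0 \<le> q u m \<and> q u m \<le> 1" if "u \<in> {1..k}" "m \<in> Mset n" for u m
      using q[OF that] by simp
    show "D m (h s) \<ge> 0" if "m \<in> Mset n" for m s
      using D[OF that] h[of s] by simp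
    show "V m s \<le> Qval n p alpha q cr cd D f h beta V m s gr gd"
      if "m \<in> Mset n" "gr \<in> {1..k}" "gd \<in> {1..k}" for m s gr gd
      using minimizer[OF that(1), of s] greedy_attains_Min[OF that(1), of s] that(2,3) by simp
  qed (use n_pos p beta alpha cr cd B minimizer greedy_attains_Min in auto)
  have "admissible g"
    unfolding admissible_def using g_adm by blast
  then show ?thesis
    using Jcost_greedy_le unfolding greedy_def by blast
qed

end
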